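(* Consider Method 2.1 (described in the context) for minimizing the discrete maximum function $f$ on $D$. Suppose the method does not terminate and the numbers $\varepsilon_k$ are chosen with $\varepsilon_k>0$ for all $k\in K$ and $\varepsilon_k\to0$. Then the sequences $\{x_k\},\{\sigma_k\}$ are defined for all $k\in K$ and $\lim_{k\to\infty}f(x_k)=f^*$, $\lim_{k\to\infty}\sigma_k=f^*$.
   Context: Setting: $D\subset\mathbb{R}^n$ closed convex; $f_j$, $j\in J=\{1,\dots,m\}$, convex on $\mathbb{R}^n$; $f(x)=\max_{j\in J}f_j(x)$; $f^*=\min_Df$ is attained; $X^*=\{x\in D:f(x)=f^*\}$; $K=\{0,1,\dots\}$; $\partial f_j(x)$ is the subdifferential. Method 2.1: fix $x^*\in X^*$; choose a closed convex bounded $G_0\subseteq D$ with $x^*\in G_0$, a closed convex $M_0\subset\mathbb{R}^{n+1}$ with $(x^*,f^* )\in M_0$, numbers $\varepsilon_0\ge0$ and $\bar\gamma_0\le f^*$; $i=k=0$. Step 1: let $(y_i,\gamma_i)$ be a solution of $\min\{\gamma:(x,\gamma)\in M_i,\ x\in G_i,\ \gamma\ge\bar\gamma_i\}$; if $f(y_i)=\gamma_i$ stop. Step 2: if $f(y_i)-\gamma_i>\varepsilon_k$, choose closed convex $S_i\subseteq\mathbb{R}^{n+1}$ with $(x^*,f^* )\in S_i$ and set $Q_i=M_i\cap S_i$; otherwise set $i_k=i$, $x_k=y_{i_k}$, $\sigma_k=\gamma_{i_k}$, choose closed convex $Q_i\ni(x^*,f^* )$, choose $\varepsilon_{k+1}\ge0$,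 $k\leftarrow k+1$. Step 3: let $J(y_i)=\{j:f_j(y_i)=f(y_i)\}$ and choose $J_i\subset J$ containing at least one index of $J(y_i)$. Step 4: for $j\in J_i$ choose a nonempty finite $A_i^j\subset\partial f_j(y_i)$; $M_{i+1}=Q_i\cap\{(x,\gamma):f_j(y_i)+\langle a,x-y_i\rangle\le\gamma\ \forall j\in J_i,\ a\in A_i^j\}$. Step 5: choose closed convex $G_{i+1}\subseteq G_0$ with $x^*\in G_{i+1}$ and a number $\bar\gamma_{i+1}$ with $\bar\gamma_0\le\bar\gamma_{i+1}\le f^*$; $i\leftarrow i+1$; go to Step 1. *)

theory Defs
  imports "HOL-Analysis.Analysis"
begin

definition maxf :: "(nat \<Rightarrow> 'a \<Rightarrow> real) \<Rightarrow> nat \<Rightarrow> 'a \<Rightarrow> real" where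
  "maxf fs m x = Max ((\<lambda>j. fs j x) ` {1..m})"

definition subdiff :: "('a::real_inner \<Rightarrow> real) \<Rightarrow> 'a \<Rightarrow> 'a set" where
  "subdiff g x = {a. \<forall>z. g x + inner a (z - x) \<le> g z}"

definition active :: "(nat \<Rightarrow> 'a \<Rightarrow> real) \<Rightarrow> nat \<Rightarrow> 'a \<Rightarrow> nat set" where
  "active fs m y = {j \<in> {1..m}. fs j y = maxf fs m y}"

text \<open>The outer counter k of Method 2.1 at the beginning of inner iteration i:
  it is incremented exactly at those i where f(y_i) - gamma_i <= eps_k.\<close>
fun kctr :: "('a \<Rightarrow> real) \<Rightarrow> (nat \<Rightarrow> 'a) \<Rightarrow> (nat \<Rightarrow> real) \<Rightarrow> (nat \<Rightarrow> real) \<Rightarrow> nat \<Rightarrow> nat" where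
  "kctr f y g e 0 = 0"
| "kctr f y g e (Suc i) =
     (if f (y i) - g i > e (kctr f y g e i) then kctr f y g e i else Suc (kctr f y g e i))"

text \<open>The index i_k: the inner iteration at which the "otherwise" branch of
  Step 2 is taken while the outer counter equals k.\<close>
definition outer_idx :: "('a \<Rightarrow> real) \<Rightarrow> (nat \<Rightarrow> 'a) \<Rightarrow> (nat \<Rightarrow> real) \<Rightarrow> (nat \<Rightarrow> real) \<Rightarrow> nat \<Rightarrow> nat" where
  "outer_idx f y g e k = (LEAST i. kctr f y g e i = k \<and> \<not> (f (y i) - g i > e k))"

end

theory Submission
  imports Defs
begin

text \<open>The point (x*, f*) stays feasible for every auxiliary problem, so
  gamma_i \<le> f* \<le> f(y_i). Subgradients of the f_j are bounded by some B on the
  bounded set G_0, so the cut made at y_i gives f(y_i) - B|x - y_i| \<le> g for all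
  (x, g) in M_(i+1), and also f(y_i) - B|x - y_i| \<le> f(x). If an outer stage k
  never ended, the sets M_i would be nested from some index on, and for all later
  i < l we would get eps_k < f(y_l) - gamma_l \<le> 2B|y_l - y_i|, which is impossible
  because a bounded sequence has pairs of arbitrarily close terms. So every stage
  ends, and at its end f(x_k) and sigma_k lie within eps_k of f*.\<close>

lemma maxf_ge: "j \<in> {1..m} \<Longrightarrow> fs j x \<le> maxf fs m x"
  unfolding maxf_def by (rule Max_ge) auto

lemma bounded_seq_close_pair:
  fixes z :: "nat \<Rightarrow> 'a::heine_borel"
  assumes "bounded (range z)" "e > 0"
  shows "\<exists>i l. i < l \<and> dist (z l) (z i) < e"
proof -
  obtain r p where r: "strict_mono r" and lim: "(z \<circ> r) \<longlonglongrightarrow> p"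
    using bounded_imp_convergent_subsequence[OF assms(1)] by blast
  from lim have "Cauchy (z \<circ> r)" by (rule LIMSEQ_imp_Cauchy)
  then obtain N where "\<And>n n'. n \<ge> N \<Longrightarrow> n' \<ge> N \<Longrightarrow> dist (z (r n)) (z (r n')) < e"
    using metric_CauchyD[OF _ \<open>e > 0\<close>] by fastforce
  moreover have "r N < r (Suc N)" using r by (simp add: strict_mono_def)
  ultimately show ?thesis by (metis le_SucI order_refl)
qed

lemma bounded_subdiff:
  fixes g :: "'a::euclidean_space \<Rightarrow> real"
  assumes "convex_on UNIV g" "bounded G"
  shows "bounded (\<Union>x\<in>G. subdiff g x)"
proof -
  obtain R where R: "\<And>x. x \<in> G \<Longrightarrow> norm x \<le> R"
    using \<open>bounded G\<close> bounded_iff by blast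
  have "continuous_on UNIV g" using assms(1) convex_on_continuous by blast
  then have "bounded (g ` cball 0 (R + 1))"
    by (meson compact_cball compact_continuous_image compact_imp_bounded continuous_on_subset
        subset_UNIV)
  then obtain C where "\<forall>v\<in>g ` cball 0 (R + 1). \<bar>v\<bar> \<le> C"
    unfolding bounded_iff real_norm_def by blast
  then have C: "\<And>x. norm x \<le> R + 1 \<Longrightarrow> \<bar>g x\<bar> \<le> C" by simp
  have "norm a \<le> 2 * C" if x: "x \<in> G" and a: "a \<in> subdiff g x" for x a
  proof (cases "a = 0")
    case True
    then show ?thesis using C[of x] R[OF x] by simp
  next
    case False
    define z where "z = x + a /\<^sub>R norm a"
    have "norm z \<le> R + 1"
      using norm_triangle_ineq[of x "a /\<^sub>R norm a"] R[OF x] False by (simp add: z_def)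
    have "inner a (z - x) = norm a"
      using False by (simp add: z_def power2_norm_eq_inner[symmetric] power2_eq_square)
    moreover have "g x + inner a (z - x) \<le> g z" using a by (simp add: subdiff_def)
    ultimately show ?thesis using C[OF \<open>norm z \<le> R + 1\<close>] C[of x] R[OF x] by linarith
  qed
  then show ?thesis unfolding bounded_iff by blast
qed

lemma neg_inner_le_norm_mult:
  fixes a v :: "'a::real_inner"
  assumes "norm a \<le> B"
  shows "- (B * norm v) \<le> inner a v"
proof -
  have "\<bar>inner a v\<bar> \<le> B * norm v"
    using Cauchy_Schwarz_ineq2[of a v] mult_right_mono[OF assms norm_ge_zero[of v]] by linarith
  then show ?thesis by linarith
qed

text \<open>Neither closedness and convexity of the sets G_i, M_i, Q_i, S_i nor the
  non-termination hypothesis f(y_i) \<noteq> gamma_i plays a role in the convergence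
  argument, so they are omitted.\<close>

locale cutting_plane_run =
  fixes fs :: "nat \<Rightarrow> 'a::euclidean_space \<Rightarrow> real" and m :: nat
    and D :: "'a set" and xstar :: 'a and fstar :: real
    and y :: "nat \<Rightarrow> 'a" and \<gamma> :: "nat \<Rightarrow> real"
    and G :: "nat \<Rightarrow> 'a set" and M Q S :: "nat \<Rightarrow> ('a \<times> real) set"
    and gbar eps :: "nat \<Rightarrow> real"
    and Js :: "nat \<Rightarrow> nat set" and A :: "nat \<Rightarrow> nat \<Rightarrow> 'a set"
  assumes convex: "j \<in> {1..m} \<Longrightarrow> convex_on UNIV (fs j)"
    and xstar_min: "x \<in> D \<Longrightarrow> maxf fs m xstar \<le> maxf fs m x"
    and fstar: "fstar = maxf fs m xstar"
    and bounded_G0: "bounded (G 0)"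
    and G0_sub_D: "G 0 \<subseteq> D"
    and G_sub_G0: "G i \<subseteq> G 0"
    and xstar_in_G: "xstar \<in> G i"
    and optimum_in_M0: "(xstar, fstar) \<in> M 0"
    and gbar_le: "gbar i \<le> fstar"
    and feasible: "(y i, \<gamma> i) \<in> M i" "y i \<in> G i"
    and minimal: "(x, g) \<in> M i \<Longrightarrow> x \<in> G i \<Longrightarrow> gbar i \<le> g \<Longrightarrow> \<gamma> i \<le> g"
    and Q_large_gap: "eps (kctr (maxf fs m) y \<gamma> eps i) < maxf fs m (y i) - \<gamma> i \<Longrightarrow>
        (xstar, fstar) \<in> S i \<and> Q i = M i \<inter> S i"
    and Q_small_gap: "\<not> eps (kctr (maxf fs m) y \<gamma> eps i) < maxf fs m (y i) - \<gamma> i \<Longrightarrow>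
        (xstar, fstar) \<in> Q i"
    and Js_sub: "Js i \<subseteq> {1..m}"
    and Js_active: "Js i \<inter> active fs m (y i) \<noteq> {}"
    and A_nonempty: "j \<in> Js i \<Longrightarrow> A i j \<noteq> {}"
    and A_subdiff: "j \<in> Js i \<Longrightarrow> A i j \<subseteq> subdiff (fs j) (y i)"
    and M_Suc: "M (Suc i) = Q i \<inter>
        {(x, g). \<forall>j\<in>Js i. \<forall>a\<in>A i j. fs j (y i) + inner a (x - y i) \<le> g}"
    and eps_pos: "eps k > 0"
    and eps_lim: "eps \<longlonglongrightarrow> 0"
begin

abbreviation f where "f \<equiv> maxf fs m"
abbreviation kc where "kc \<equiv> kctr f y \<gamma> eps"
abbreviation gap where "gap i \<equiv> f (y i) - \<gamma> i"
abbreviation outer where "outer k \<equiv> outer_idx f y \<gamma> eps k"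

lemma optimum_in_M: "(xstar, fstar) \<in> M i"
proof (induction i)
  case 0
  show ?case by (rule optimum_in_M0)
next
  case (Suc i)
  have "(xstar, fstar) \<in> Q i"
    using Suc.IH Q_large_gap[of i] Q_small_gap[of i] by blast
  moreover have "fs j (y i) + inner a (xstar - y i) \<le> fstar" if "j \<in> Js i" "a \<in> A i j" for j a
  proof -
    have "fs j (y i) + inner a (xstar - y i) \<le> fs j xstar"
      using A_subdiff that by (auto simp: subdiff_def)
    also have "\<dots> \<le> fstar" unfolding fstar using Js_sub that(1) by (blast intro: maxf_ge)
    finally show ?thesis .
  qed
  ultimately show ?case unfolding M_Suc by blast
qed

lemma gamma_le_fstar: "\<gamma> i \<le> fstar"
  using minimal[OF optimum_in_M xstar_in_G gbar_le] .

lemma fstar_le_f_y: "fstar \<le> f (y i)"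
  unfolding fstar using xstar_min G0_sub_D G_sub_G0 feasible(2) by blast

lemma cut_lower_bounds:
  obtains B where "B \<ge> 0"
    and "\<And>i x. f (y i) - B * dist x (y i) \<le> f x"
    and "\<And>i x g. (x, g) \<in> M (Suc i) \<Longrightarrow> f (y i) - B * dist x (y i) \<le> g"
proof -
  have "bounded (\<Union>j\<in>{1..m}. \<Union>x\<in>G 0. subdiff (fs j) x)"
    by (rule bounded_UN) (auto intro: bounded_subdiff[OF convex bounded_G0])
  then obtain B where "B > 0"
    and B: "\<And>j x a. j \<in> {1..m} \<Longrightarrow> x \<in> G 0 \<Longrightarrow> a \<in> subdiff (fs j) x \<Longrightarrow> norm a \<le> B"
    unfolding bounded_pos by blast
  have bounds: "f (y i) - B * dist x (y i) \<le> f x \<and>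
      (\<forall>g. (x, g) \<in> M (Suc i) \<longrightarrow> f (y i) - B * dist x (y i) \<le> g)" for i x
  proof -
    obtain j where j: "j \<in> Js i" "j \<in> active fs m (y i)" using Js_active by blast
    then obtain a where a: "a \<in> A i j" using A_nonempty by blast
    have "j \<in> {1..m}" using Js_sub j(1) by blast
    have "a \<in> subdiff (fs j) (y i)" using A_subdiff j(1) a by blast
    moreover have "norm a \<le> B"
      using B[OF \<open>j \<in> {1..m}\<close> _ calculation] G_sub_G0 feasible(2) by blast
    ultimately have "f (y i) - B * dist x (y i) \<le> fs j (y i) + inner a (x - y i)"
      and "fs j (y i) + inner a (x - y i) \<le> fs j x"
      using j(2) neg_inner_le_norm_mult[of a B "x - y i"]
      by (auto simp: active_def dist_norm subdiff_def)
    then show ?thesis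
      using maxf_ge[OF \<open>j \<in> {1..m}\<close>, of fs x] j(1) a unfolding M_Suc by fastforce
  qed
  show thesis by (rule that[of B]) (use \<open>B > 0\<close> bounds in auto)
qed

lemma M_Suc_sub_if_large_gap: "eps (kc i) < gap i \<Longrightarrow> M (Suc i) \<subseteq> M i"
  using Q_large_gap M_Suc by blast

lemma M_antimono_while_large_gap:
  assumes "\<And>i. i0 \<le> i \<Longrightarrow> eps (kc i) < gap i" "i0 \<le> i" "i \<le> l"
  shows "M l \<subseteq> M i"
  using \<open>i \<le> l\<close>
proof (induction rule: dec_induct)
  case (step n)
  then have "M (Suc n) \<subseteq> M n" using M_Suc_sub_if_large_gap assms(1,2) by simp
  with step.IH show ?case by blast
qed simp

lemma kc_constant_while_large_gap:
  assumes "kc i0 = k" "\<And>i. i0 \<le> i \<Longrightarrow> kc i = k \<Longrightarrow> eps k < gap i" "i0 \<le> i"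
  shows "kc i = k"
  using \<open>i0 \<le> i\<close>
proof (induction rule: dec_induct)
  case (step n)
  then show ?case using assms(2)[of n] by simp
qed (rule assms(1))

lemma stage_ends:
  assumes "kc i0 = k"
  shows "\<exists>i\<ge>i0. kc i = k \<and> \<not> eps k < gap i"
proof (rule ccontr)
  assume "\<not> ?thesis"
  then have gap_large: "\<And>i. i0 \<le> i \<Longrightarrow> kc i = k \<Longrightarrow> eps k < gap i" by blast
  have large: "kc i = k \<and> eps k < gap i" if "i0 \<le> i" for i
    using kc_constant_while_large_gap[OF assms gap_large that] gap_large that by blast
  obtain B where "B \<ge> 0"
    and on_f: "\<And>i x. f (y i) - B * dist x (y i) \<le> f x"
    and on_M: "\<And>i x g. (x, g) \<in> M (Suc i) \<Longrightarrow> f (y i) - B * dist x (y i) \<le> g"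
    using cut_lower_bounds by blast
  have gap_le_dist: "eps k < 2 * B * dist (y l) (y i)" if "i0 \<le> i" "i < l" for i l
  proof -
    have "M l \<subseteq> M (Suc i)"
      using M_antimono_while_large_gap[of i0 "Suc i" l] large that by simp
    then have "f (y i) - B * dist (y l) (y i) \<le> \<gamma> l" using on_M feasible(1) by blast
    moreover have "f (y l) - B * dist (y i) (y l) \<le> f (y i)" by (rule on_f)
    moreover have "eps k < gap l" using large that by simp
    ultimately show ?thesis by (simp add: dist_commute)
  qed
  define d where "d = eps k / (2 * B + 1)"
  have "d > 0" using eps_pos \<open>B \<ge> 0\<close> by (simp add: d_def)
  have "range (\<lambda>n. y (i0 + n)) \<subseteq> G 0" using G_sub_G0 feasible(2) by blast
  then have "bounded (range (\<lambda>n. y (i0 + n)))" by (rule bounded_subset[OF bounded_G0])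
  then obtain i l where "i < l" and close: "dist (y (i0 + l)) (y (i0 + i)) < d"
    using bounded_seq_close_pair \<open>d > 0\<close> by blast
  have "(2 * B + 1) * d = eps k" unfolding d_def using \<open>B \<ge> 0\<close> by simp
  then have "2 * B * d + d = eps k" by (simp add: distrib_right)
  have "eps k < 2 * B * dist (y (i0 + l)) (y (i0 + i))"
    using gap_le_dist \<open>i < l\<close> by simp
  also have "\<dots> \<le> 2 * B * d" using close \<open>B \<ge> 0\<close> by (simp add: mult_left_mono)
  also have "\<dots> < eps k" using \<open>2 * B * d + d = eps k\<close> \<open>d > 0\<close> by linarith
  finally show False .
qed

lemma every_stage_ends: "\<exists>i. kc i = k \<and> \<not> eps k < gap i"
proof -
  have "\<exists>i. kc i = k"
  proof (induction k)
    case 0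
    show ?case by (metis kctr.simps(1))
  next
    case (Suc k)
    then obtain i where "kc i = k" "\<not> eps k < gap i" using stage_ends by blast
    then show ?case by (metis kctr.simps(2))
  qed
  then show ?thesis using stage_ends by blast
qed

lemma outer_idx_ends_stage: "kc (outer k) = k \<and> \<not> eps k < gap (outer k)"
  unfolding outer_idx_def using every_stage_ends by (rule LeastI_ex)

lemma f_outer_tendsto: "(\<lambda>k. f (y (outer k))) \<longlonglongrightarrow> fstar"
proof (rule real_tendsto_sandwich[OF _ _ tendsto_const])
  show "(\<lambda>k. fstar + eps k) \<longlonglongrightarrow> fstar"
    using tendsto_add[OF tendsto_const eps_lim] by simp
  show "\<forall>\<^sub>F k in sequentially. fstar \<le> f (y (outer k))" by (simp add: fstar_le_f_y)
  show "\<forall>\<^sub>F k in sequentially. f (y (outer k)) \<le> fstar + eps k"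
  proof (intro always_eventually allI)
    show "f (y (outer k)) \<le> fstar + eps k" for k
      using outer_idx_ends_stage[of k] gamma_le_fstar[of "outer k"] by simp
  qed
qed

lemma gamma_outer_tendsto: "(\<lambda>k. \<gamma> (outer k)) \<longlonglongrightarrow> fstar"
proof (rule real_tendsto_sandwich[OF _ _ _ tendsto_const])
  show "(\<lambda>k. fstar - eps k) \<longlonglongrightarrow> fstar"
    using tendsto_diff[OF tendsto_const eps_lim] by simp
  show "\<forall>\<^sub>F k in sequentially. \<gamma> (outer k) \<le> fstar" by (simp add: gamma_le_fstar)
  show "\<forall>\<^sub>F k in sequentially. fstar - eps k \<le> \<gamma> (outer k)"
  proof (intro always_eventually allI)
    show "fstar - eps k \<le> \<gamma> (outer k)" for k
      using outer_idx_ends_stage[of k] fstar_le_f_y[of "outer k"] by simp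
  qed
qed

end

theorem theorem2p1p3:
  fixes D :: "(real^'n) set"
    and fs :: "nat \<Rightarrow> real^'n \<Rightarrow> real" and m :: nat
    and xstar :: "real^'n" and fstar :: real
    and y :: "nat \<Rightarrow> real^'n" and \<gamma> :: "nat \<Rightarrow> real"
    and G :: "nat \<Rightarrow> (real^'n) set"
    and M Q S :: "nat \<Rightarrow> ((real^'n) \<times> real) set"
    and gbar :: "nat \<Rightarrow> real" and eps :: "nat \<Rightarrow> real"
    and Js :: "nat \<Rightarrow> nat set" and A :: "nat \<Rightarrow> nat \<Rightarrow> (real^'n) set"
  assumes D: "closed D" "convex D"
    and m: "m \<ge> 1"
    and fconv: "\<And>j. j \<in> {1..m} \<Longrightarrow> convex_on UNIV (fs j)"
    and xstar: "xstar \<in> D" "\<And>x. x \<in> D \<Longrightarrow> maxf fs m xstar \<le> maxf fs m x"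
    and fstar: "fstar = maxf fs m xstar"
    \<comment> \<open>initialization\<close>
    and G0: "closed (G 0)" "convex (G 0)" "bounded (G 0)" "G 0 \<subseteq> D" "xstar \<in> G 0"
    and M0: "closed (M 0)" "convex (M 0)" "(xstar, fstar) \<in> M 0"
    and gbar0: "gbar 0 \<le> fstar"
    \<comment> \<open>Step 1: (y_i, gamma_i) solves the auxiliary problem\<close>
    and step1: "\<And>i. (y i, \<gamma> i) \<in> M i \<and> y i \<in> G i \<and> \<gamma> i \<ge> gbar i"
    and step1min: "\<And>i x g. (x, g) \<in> M i \<Longrightarrow> x \<in> G i \<Longrightarrow> g \<ge> gbar i \<Longrightarrow> \<gamma> i \<le> g"
    \<comment> \<open>the method does not terminate\<close>
    and noterm: "\<And>i. maxf fs m (y i) \<noteq> \<gamma> i"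
    \<comment> \<open>Step 2\<close>
    and step2a: "\<And>i. maxf fs m (y i) - \<gamma> i > eps (kctr (maxf fs m) y \<gamma> eps i) \<Longrightarrow>
        closed (S i) \<and> convex (S i) \<and> (xstar, fstar) \<in> S i \<and> Q i = M i \<inter> S i"
    and step2b: "\<And>i. \<not> (maxf fs m (y i) - \<gamma> i > eps (kctr (maxf fs m) y \<gamma> eps i)) \<Longrightarrow>
        closed (Q i) \<and> convex (Q i) \<and> (xstar, fstar) \<in> Q i"
    \<comment> \<open>Step 3\<close>
    and step3: "\<And>i. Js i \<subseteq> {1..m} \<and> Js i \<inter> active fs m (y i) \<noteq> {}"
    \<comment> \<open>Step 4\<close>
    and step4A: "\<And>i j. j \<in> Js i \<Longrightarrow>
        finite (A i j) \<and> A i j \<noteq> {} \<and> A i j \<subseteq> subdiff (fs j) (y i)"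
    and step4M: "\<And>i. M (Suc i) = Q i \<inter>
        {(x, g). \<forall>j\<in>Js i. \<forall>a\<in>A i j. fs j (y i) + inner a (x - y i) \<le> g}"
    \<comment> \<open>Step 5\<close>
    and step5G: "\<And>i. closed (G (Suc i)) \<and> convex (G (Suc i)) \<and> G (Suc i) \<subseteq> G 0
        \<and> xstar \<in> G (Suc i)"
    and step5g: "\<And>i. gbar 0 \<le> gbar (Suc i) \<and> gbar (Suc i) \<le> fstar"
    \<comment> \<open>choice of the tolerances\<close>
    and eps_pos: "\<And>k. eps k > 0"
    and eps_lim: "eps \<longlonglongrightarrow> 0"
  shows "(\<forall>k. \<exists>i. kctr (maxf fs m) y \<gamma> eps i = k \<and>
              \<not> (maxf fs m (y i) - \<gamma> i > eps k))
    \<and> (\<lambda>k. maxf fs m (y (outer_idx (maxf fs m) y \<gamma> eps k))) \<longlonglongrightarrow> fstar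
    \<and> (\<lambda>k. \<gamma> (outer_idx (maxf fs m) y \<gamma> eps k)) \<longlonglongrightarrow> fstar"
proof -
  have "G i \<subseteq> G 0" "xstar \<in> G i" "gbar i \<le> fstar" for i
    using G0 step5G gbar0 step5g by (cases i; auto)+
  then interpret cutting_plane_run fs m D xstar fstar y \<gamma> G M Q S gbar eps Js A
    by unfold_locales (use assms in auto)
  show ?thesis using every_stage_ends f_outer_tendsto gamma_outer_tendsto by blast
qed

end
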